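(* Let $\Delta\ge 41$ be an integer and $k=\lceil 27\Delta\ln\Delta\rceil$. If $G$ is a graph with maximum degree $\Delta$ and $Y$ is an independent set of vertices in $G$, then the set $E_G(Y,V(G)\setminus Y)$ of edges with one end in $Y$ and the other in $V(G)\setminus Y$ can be partitioned into $k$ $G$-good sets.
   Context: All graphs are finite and simple; $\ln$ is the natural logarithm. A set $F$ of edges of $G$ is \emph{$G$-good} if no two distinct edges $e,f\in F$ satisfy either (i) $e$ and $f$ share no vertex and some edge of $G$ joins an endpoint of $e$ to an endpoint of $f$, or (ii) $e$ and $f$ lie in a common triangle of $G$. (A partition into $k$ sets may have some empty parts.) *)

theory Defs
  imports Complex_Main
begin

definition simple_graph :: "'a set \<Rightarrow> 'a set set \<Rightarrow> bool" where
  "simple_graph V E \<longleftrightarrow> finite V \<and> (\<forall>e\<in>E. e \<subseteq> V \<and> card e = 2)"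

definition degree :: "'a set set \<Rightarrow> 'a \<Rightarrow> nat" where
  "degree E v = card {e\<in>E. v \<in> e}"

definition max_degree :: "'a set \<Rightarrow> 'a set set \<Rightarrow> nat" where
  "max_degree V E = Max (degree E ` V)"

definition independent_set :: "'a set \<Rightarrow> 'a set set \<Rightarrow> 'a set \<Rightarrow> bool" where
  "independent_set V E Y \<longleftrightarrow> Y \<subseteq> V \<and> (\<forall>x\<in>Y. \<forall>y\<in>Y. {x, y} \<notin> E)"

definition cut_edges :: "'a set \<Rightarrow> 'a set set \<Rightarrow> 'a set \<Rightarrow> 'a set set" where
  "cut_edges V E Y = {e\<in>E. \<exists>y\<in>Y. \<exists>x\<in>V - Y. e = {y, x}}"

definition triangle :: "'a set set \<Rightarrow> 'a \<Rightarrow> 'a \<Rightarrow> 'a \<Rightarrow> bool" where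
  "triangle E a b c \<longleftrightarrow> {a, b} \<in> E \<and> {b, c} \<in> E \<and> {a, c} \<in> E"

definition good_set :: "'a set set \<Rightarrow> 'a set set \<Rightarrow> bool" where
  "good_set E F \<longleftrightarrow> F \<subseteq> E \<and>
     (\<forall>e\<in>F. \<forall>f\<in>F. e \<noteq> f \<longrightarrow>
        \<not> ((e \<inter> f = {} \<and> (\<exists>x\<in>e. \<exists>y\<in>f. {x, y} \<in> E)) \<or>
           (\<exists>a b c. triangle E a b c \<and> e \<subseteq> {a, b, c} \<and> f \<subseteq> {a, b, c})))"

end

theory Submission
  imports Defs "HOL-Library.FuncSet"
begin

text \<open>
  Label every vertex outside Y, independently in each of k rounds, with a uniformly random
  number below 2 Delta. In round i a cut edge e with outer end x is selected if x is the only
  vertex labelled 0 among the vertices outside Y adjacent to an end of e. Two cut edges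
  selected in the same round either share their outer end or are joined by no edge, and as Y
  is independent they lie in no common triangle; so the edges selected in one round form a
  G-good set. An edge is selected in a fixed round with probability at least 1/(6 Delta), hence
  in no round with probability at most Delta^-4 once k >= 27 Delta ln Delta. This bad event
  depends only on the labels near e, so it shares variables with at most 2 Delta^3 bad events,
  and the symmetric Lovasz local lemma, in its counting form on a finite product space, gives
  a labelling in which every cut edge is selected in some round.
\<close>

definition depends_only_on :: "'c set \<Rightarrow> 'r set \<Rightarrow> 'c set \<Rightarrow> ('c \<Rightarrow> 'r) set \<Rightarrow> bool" where
  "depends_only_on C R S A \<longleftrightarrow> (\<forall>w\<in>C \<rightarrow>\<^sub>E R. \<forall>w'\<in>C \<rightarrow>\<^sub>E R.
      (\<forall>c\<in>S. w c = w' c) \<longrightarrow> (w \<in> A \<longleftrightarrow> w' \<in> A))"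

lemma depends_only_on_mono: "depends_only_on C R S A \<Longrightarrow> S \<subseteq> T \<Longrightarrow> depends_only_on C R T A"
  unfolding depends_only_on_def by blast

lemma depends_only_on_eq_restrict_preimage:
  assumes "A \<subseteq> C \<rightarrow>\<^sub>E R" "depends_only_on C R S A"
  shows "A = {w \<in> C \<rightarrow>\<^sub>E R. restrict w S \<in> (\<lambda>w. restrict w S) ` A}"
proof (intro equalityI subsetI)
  fix w assume "w \<in> {w \<in> C \<rightarrow>\<^sub>E R. restrict w S \<in> (\<lambda>w. restrict w S) ` A}"
  then obtain w' where "w \<in> C \<rightarrow>\<^sub>E R" "w' \<in> A" "restrict w S = restrict w' S" by auto
  with assms show "w \<in> A" unfolding depends_only_on_def by (metis restrict_apply' subsetD)
qed (use assms(1) in auto)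

lemma card_PiE_restrict_split:
  assumes "S \<subseteq> C"
  shows "card {w \<in> C \<rightarrow>\<^sub>E R. restrict w S \<in> P \<and> restrict w (C - S) \<in> Q}
       = card (P \<inter> (S \<rightarrow>\<^sub>E R)) * card (Q \<inter> ((C - S) \<rightarrow>\<^sub>E R))"
proof -
  define merge where "merge s u = (\<lambda>c. if c \<in> S then s c else u c)" for s u :: "'a \<Rightarrow> 'b"
  have merge_restrict: "merge (restrict w S) (restrict w (C - S)) = w" if "w \<in> C \<rightarrow>\<^sub>E R" for w
  proof
    fix c show "merge (restrict w S) (restrict w (C - S)) c = w c"
      using that assms PiE_arb[OF that, of c] by (auto simp: merge_def)
  qed
  have restrict_merge: "restrict (merge s u) S = s" "restrict (merge s u) (C - S) = u"
    if "s \<in> S \<rightarrow>\<^sub>E R" "u \<in> (C - S) \<rightarrow>\<^sub>E R" for s u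
    using that by (auto simp: merge_def fun_eq_iff PiE_iff extensional_def)
  have merge_PiE: "merge s u \<in> C \<rightarrow>\<^sub>E R"
    if "s \<in> S \<rightarrow>\<^sub>E R" "u \<in> (C - S) \<rightarrow>\<^sub>E R" for s u
    using that assms by (auto simp: merge_def PiE_iff extensional_def)
  have "bij_betw (\<lambda>w. (restrict w S, restrict w (C - S)))
          {w \<in> C \<rightarrow>\<^sub>E R. restrict w S \<in> P \<and> restrict w (C - S) \<in> Q}
          ((P \<inter> (S \<rightarrow>\<^sub>E R)) \<times> (Q \<inter> ((C - S) \<rightarrow>\<^sub>E R)))"
  proof (rule bij_betw_byWitness[where f' = "\<lambda>(s, u). merge s u"])
    show "(\<lambda>(s, u). merge s u) ` ((P \<inter> (S \<rightarrow>\<^sub>E R)) \<times> (Q \<inter> ((C - S) \<rightarrow>\<^sub>E R)))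
        \<subseteq> {w \<in> C \<rightarrow>\<^sub>E R. restrict w S \<in> P \<and> restrict w (C - S) \<in> Q}"
      using restrict_merge merge_PiE by force
    show "(\<lambda>w. (restrict w S, restrict w (C - S)))
        ` {w \<in> C \<rightarrow>\<^sub>E R. restrict w S \<in> P \<and> restrict w (C - S) \<in> Q}
        \<subseteq> (P \<inter> (S \<rightarrow>\<^sub>E R)) \<times> (Q \<inter> ((C - S) \<rightarrow>\<^sub>E R))"
      using assms by (auto simp: restrict_PiE_iff PiE_mem)
  qed (use merge_restrict restrict_merge in auto)
  then show ?thesis by (simp add: bij_betw_same_card card_cartesian_product)
qed

lemma card_Int_independent_events:
  assumes "A \<subseteq> C \<rightarrow>\<^sub>E R" "B \<subseteq> C \<rightarrow>\<^sub>E R"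
    and "depends_only_on C R S A" "depends_only_on C R T B"
    and "S \<subseteq> C" "T \<subseteq> C" "S \<inter> T = {}"
  shows "card (A \<inter> B) * card (C \<rightarrow>\<^sub>E R) = card A * card B"
proof -
  let ?U = "C - S"
  define PA where "PA = (\<lambda>w. restrict w S) ` A"
  define PB where "PB = (\<lambda>w. restrict w ?U) ` B"
  have "depends_only_on C R ?U B"
    using depends_only_on_mono[OF assms(4)] assms(6,7) by blast
  then have B: "B = {w \<in> C \<rightarrow>\<^sub>E R. restrict w ?U \<in> PB}"
    unfolding PB_def by (rule depends_only_on_eq_restrict_preimage[OF assms(2)])
  have A: "A = {w \<in> C \<rightarrow>\<^sub>E R. restrict w S \<in> PA}"
    unfolding PA_def by (rule depends_only_on_eq_restrict_preimage[OF assms(1,3)])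
  have "A \<inter> B = {w \<in> C \<rightarrow>\<^sub>E R. restrict w S \<in> PA \<and> restrict w ?U \<in> PB}"
    using A B by blast
  then have "card (A \<inter> B) = card (PA \<inter> (S \<rightarrow>\<^sub>E R)) * card (PB \<inter> (?U \<rightarrow>\<^sub>E R))"
    using card_PiE_restrict_split[OF assms(5)] by simp
  moreover have "card A = card (PA \<inter> (S \<rightarrow>\<^sub>E R)) * card (?U \<rightarrow>\<^sub>E R)"
    using card_PiE_restrict_split[OF assms(5), of R PA UNIV] A by simp
  moreover have "card B = card (S \<rightarrow>\<^sub>E R) * card (PB \<inter> (?U \<rightarrow>\<^sub>E R))"
    using card_PiE_restrict_split[OF assms(5), of R UNIV PB] B by simp
  moreover have "card (C \<rightarrow>\<^sub>E R) = card (S \<rightarrow>\<^sub>E R) * card (?U \<rightarrow>\<^sub>E R)"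
    using card_PiE_restrict_split[OF assms(5), of R UNIV UNIV] by simp
  ultimately show ?thesis by (simp add: ac_simps)
qed

text \<open>
  The symmetric Lovasz local lemma for the uniform measure on the functions from C to R.
  Here d bounds the number of events sharing a variable with a given one, itself included.
\<close>

locale counting_local_lemma =
  fixes C :: "'c set" and R :: "'r set" and I :: "'i set"
    and A :: "'i \<Rightarrow> ('c \<Rightarrow> 'r) set" and sp :: "'i \<Rightarrow> 'c set"
    and p :: real and d :: nat
  assumes finite_C: "finite C" and finite_R: "finite R" and R_nonempty: "R \<noteq> {}"
    and finite_I: "finite I"
    and events: "\<And>i. i \<in> I \<Longrightarrow> A i \<subseteq> C \<rightarrow>\<^sub>E R"
    and support: "\<And>i. i \<in> I \<Longrightarrow> sp i \<subseteq> C"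
    and depends: "\<And>i. i \<in> I \<Longrightarrow> depends_only_on C R (sp i) (A i)"
    and card_events: "\<And>i. i \<in> I \<Longrightarrow> real (card (A i)) \<le> p * real (card (C \<rightarrow>\<^sub>E R))"
    and dependency_degree: "\<And>i. i \<in> I \<Longrightarrow> card {j\<in>I. sp j \<inter> sp i \<noteq> {}} \<le> d"
    and p_nonneg: "0 \<le> p" and d_pos: "1 \<le> d" and p_d: "4 * p * d \<le> 1"
begin

definition avoiding :: "'i set \<Rightarrow> ('c \<Rightarrow> 'r) set" where
  "avoiding S = {w \<in> C \<rightarrow>\<^sub>E R. \<forall>j\<in>S. w \<notin> A j}"

lemma finite_avoiding: "finite (avoiding S)"
  using finite_subset[of "avoiding S" "C \<rightarrow>\<^sub>E R"] finite_C finite_R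
  by (auto simp: avoiding_def finite_PiE)

lemma depends_avoiding:
  assumes "S \<subseteq> I"
  shows "depends_only_on C R (\<Union>j\<in>S. sp j) (avoiding S)"
  unfolding depends_only_on_def avoiding_def
proof (intro ballI impI)
  fix w w' assume w: "w \<in> C \<rightarrow>\<^sub>E R" "w' \<in> C \<rightarrow>\<^sub>E R" and agree: "\<forall>c\<in>\<Union>j\<in>S. sp j. w c = w' c"
  have "w \<in> A j \<longleftrightarrow> w' \<in> A j" if "j \<in> S" for j
    using depends[of j] w agree that assms unfolding depends_only_on_def by blast
  then show "w \<in> {w \<in> C \<rightarrow>\<^sub>E R. \<forall>j\<in>S. w \<notin> A j} \<longleftrightarrow> w' \<in> {w \<in> C \<rightarrow>\<^sub>E R. \<forall>j\<in>S. w \<notin> A j}"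
    using w by blast
qed

lemma card_event_Int_avoiding_independent:
  assumes "S \<subseteq> I" "i \<in> I" "\<forall>j\<in>S. sp j \<inter> sp i = {}"
  shows "real (card (A i \<inter> avoiding S)) \<le> p * real (card (avoiding S))"
proof -
  have "card (A i \<inter> avoiding S) * card (C \<rightarrow>\<^sub>E R) = card (A i) * card (avoiding S)"
    using assms support
    by (intro card_Int_independent_events[OF events _ depends depends_avoiding])
       (auto simp: avoiding_def subset_iff)
  then have "real (card (A i \<inter> avoiding S)) * real (card (C \<rightarrow>\<^sub>E R))
      = real (card (A i)) * real (card (avoiding S))"
    by (metis of_nat_mult)
  also have "\<dots> \<le> p * real (card (C \<rightarrow>\<^sub>E R)) * real (card (avoiding S))"
    using card_events[OF assms(2)] by (simp add: mult_right_mono)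
  finally show ?thesis
    using finite_C finite_R R_nonempty
    by (simp add: card_gt_0_iff finite_PiE PiE_eq_empty_iff algebra_simps)
qed

lemma card_avoiding_insert_pos:
  assumes "0 < card (avoiding S)"
    and "real (card (A j \<inter> avoiding S)) \<le> 2 * p * real (card (avoiding S))"
  shows "0 < card (avoiding (insert j S))"
proof -
  have "avoiding (insert j S) = avoiding S - A j \<inter> avoiding S"
    by (auto simp: avoiding_def)
  then have "card (avoiding (insert j S)) = card (avoiding S) - card (A j \<inter> avoiding S)"
    using finite_avoiding by (simp add: card_Diff_subset)
  moreover have "p \<le> 1 / 4"
    using p_d d_pos p_nonneg mult_left_mono[of 1 "real d" "4 * p"] by linarith
  then have "2 * p * real (card (avoiding S)) \<le> 1 / 2 * real (card (avoiding S))"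
    by (intro mult_right_mono) auto
  then have "card (A j \<inter> avoiding S) < card (avoiding S)"
    using assms by linarith
  ultimately show ?thesis
    by simp
qed

lemma card_avoiding_le_twice:
  assumes "S \<subseteq> I" "i \<in> I"
    and bound: "\<And>j. j \<in> S \<Longrightarrow> sp j \<inter> sp i \<noteq> {} \<Longrightarrow>
      real (card (A j \<inter> avoiding {j\<in>S. sp j \<inter> sp i = {}}))
        \<le> 2 * p * real (card (avoiding {j\<in>S. sp j \<inter> sp i = {}}))"
  shows "real (card (avoiding {j\<in>S. sp j \<inter> sp i = {}})) \<le> 2 * real (card (avoiding S))"
proof -
  define N where "N = {j\<in>S. sp j \<inter> sp i \<noteq> {}}"
  define Q where "Q = avoiding {j\<in>S. sp j \<inter> sp i = {}}"
  have finite_N: "finite N"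
    using finite_subset[OF assms(1) finite_I] unfolding N_def by auto
  have "card N \<le> card {j\<in>I. sp j \<inter> sp i \<noteq> {}}"
    using assms(1) finite_I unfolding N_def by (intro card_mono) auto
  then have card_N: "card N \<le> d"
    using dependency_degree[OF assms(2)] by linarith
  have "Q \<subseteq> avoiding S \<union> (\<Union>j\<in>N. A j \<inter> Q)"
    unfolding Q_def N_def avoiding_def by auto
  then have "card Q \<le> card (avoiding S \<union> (\<Union>j\<in>N. A j \<inter> Q))"
    using finite_N finite_avoiding[of S] finite_avoiding[of "{j\<in>S. sp j \<inter> sp i = {}}"]
    unfolding Q_def by (intro card_mono) auto
  also have "\<dots> \<le> card (avoiding S) + card (\<Union>j\<in>N. A j \<inter> Q)"
    by (rule card_Un_le)
  also have "\<dots> \<le> card (avoiding S) + (\<Sum>j\<in>N. card (A j \<inter> Q))"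
    using card_UN_le[OF finite_N, of "\<lambda>j. A j \<inter> Q"] by linarith
  finally have "card Q \<le> card (avoiding S) + (\<Sum>j\<in>N. card (A j \<inter> Q))" .
  then have "real (card Q) \<le> real (card (avoiding S)) + (\<Sum>j\<in>N. real (card (A j \<inter> Q)))"
    by (metis of_nat_add of_nat_mono of_nat_sum)
  also have "(\<Sum>j\<in>N. real (card (A j \<inter> Q))) \<le> (\<Sum>j\<in>N. 2 * p * real (card Q))"
    using bound unfolding N_def Q_def by (intro sum_mono) auto
  also have "\<dots> \<le> real d * (2 * p * real (card Q))"
    using card_N p_nonneg by (simp add: mult_right_mono)
  also have "\<dots> \<le> real (card Q) / 2"
    using mult_right_mono[OF p_d, of "real (card Q)"] by (simp add: algebra_simps)
  finally show ?thesis
    unfolding Q_def by linarith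
qed

lemma card_event_Int_avoiding_le:
  assumes "S \<subseteq> I" "i \<in> I"
    and "real (card (avoiding {j\<in>S. sp j \<inter> sp i = {}})) \<le> 2 * real (card (avoiding S))"
  shows "real (card (A i \<inter> avoiding S)) \<le> 2 * p * real (card (avoiding S))"
proof -
  let ?S' = "{j\<in>S. sp j \<inter> sp i = {}}"
  have "A i \<inter> avoiding S \<subseteq> A i \<inter> avoiding ?S'"
    by (auto simp: avoiding_def)
  then have "real (card (A i \<inter> avoiding S)) \<le> real (card (A i \<inter> avoiding ?S'))"
    using finite_avoiding[of ?S'] by (simp add: card_mono)
  also have "\<dots> \<le> p * real (card (avoiding ?S'))"
    using assms(1,2) by (intro card_event_Int_avoiding_independent) auto
  also have "\<dots> \<le> p * (2 * real (card (avoiding S)))"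
    using assms(3) p_nonneg by (rule mult_left_mono)
  finally show ?thesis
    by simp
qed

text \<open>
  The induction of the local lemma: relative to the points avoiding S, an event sharing no
  variable with S keeps its density p, and the at most d events of S that do share variables
  with it shrink the reference set by at most a factor 2.
\<close>

lemma avoiding_positive_and_conditional_bound:
  assumes "S \<subseteq> I"
  shows "0 < card (avoiding S) \<and>
    (\<forall>i\<in>I - S. real (card (A i \<inter> avoiding S)) \<le> 2 * p * real (card (avoiding S)))"
  using assms
proof (induction "card S" arbitrary: S rule: less_induct)
  case less
  have finite_S: "finite S"
    using less.prems finite_I finite_subset by blast
  have positive: "0 < card (avoiding S)"
  proof (cases "S = {}")
    case True
    then have "avoiding S = C \<rightarrow>\<^sub>E R"
      by (simp add: avoiding_def)
    then show ?thesis
      using finite_C finite_R R_nonempty by (simp add: card_gt_0_iff finite_PiE PiE_eq_empty_iff)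
  next
    case False
    then obtain j where j: "j \<in> S" by blast
    moreover have "card (S - {j}) < card S"
      using finite_S j by (rule card_Diff1_less)
    ultimately have "0 < card (avoiding (insert j (S - {j})))"
      using less.hyps[of "S - {j}"] less.prems by (intro card_avoiding_insert_pos) auto
    with j show ?thesis
      by (simp add: insert_absorb)
  qed
  have "real (card (A i \<inter> avoiding S)) \<le> 2 * p * real (card (avoiding S))" if i: "i \<in> I - S" for i
  proof (rule card_event_Int_avoiding_le[OF less.prems])
    show "real (card (avoiding {j\<in>S. sp j \<inter> sp i = {}})) \<le> 2 * real (card (avoiding S))"
    proof (rule card_avoiding_le_twice[OF less.prems])
      fix j assume "j \<in> S" "sp j \<inter> sp i \<noteq> {}"
      then have "card {j\<in>S. sp j \<inter> sp i = {}} < card S"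
        using finite_S by (intro psubset_card_mono) auto
      then show "real (card (A j \<inter> avoiding {j\<in>S. sp j \<inter> sp i = {}}))
          \<le> 2 * p * real (card (avoiding {j\<in>S. sp j \<inter> sp i = {}}))"
        using less.hyps[of "{j\<in>S. sp j \<inter> sp i = {}}"] less.prems i \<open>j \<in> S\<close> \<open>sp j \<inter> sp i \<noteq> {}\<close>
        by auto
    qed (use i in auto)
  qed (use i in auto)
  with positive show ?case by blast
qed

theorem exists_avoiding_all: "\<exists>w\<in>C \<rightarrow>\<^sub>E R. \<forall>i\<in>I. w \<notin> A i"
proof -
  have "avoiding I \<noteq> {}"
    using avoiding_positive_and_conditional_bound[of I] by auto
  then show ?thesis by (auto simp: avoiding_def)
qed

end

lemma card_PiE_transpose_Collect:
  assumes "finite K" "N \<subseteq> X \<rightarrow>\<^sub>E R"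
  shows "card {w \<in> X \<rightarrow>\<^sub>E (K \<rightarrow>\<^sub>E R). \<forall>i\<in>K. (\<lambda>z\<in>X. w z i) \<in> N} = card N ^ card K"
proof -
  let ?W = "{w \<in> X \<rightarrow>\<^sub>E (K \<rightarrow>\<^sub>E R). \<forall>i\<in>K. (\<lambda>z\<in>X. w z i) \<in> N}"
  have "bij_betw (\<lambda>w. \<lambda>i\<in>K. \<lambda>z\<in>X. w z i) ?W (K \<rightarrow>\<^sub>E N)"
  proof (rule bij_betw_byWitness[where f' = "\<lambda>v. \<lambda>z\<in>X. \<lambda>i\<in>K. v i z"])
    show "\<forall>w\<in>?W. (\<lambda>z\<in>X. \<lambda>i\<in>K. (\<lambda>i\<in>K. \<lambda>z\<in>X. w z i) i z) = w"
    proof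
      fix w assume "w \<in> ?W"
      then have "w \<in> X \<rightarrow>\<^sub>E (K \<rightarrow>\<^sub>E R)" by blast
      then show "(\<lambda>z\<in>X. \<lambda>i\<in>K. (\<lambda>i\<in>K. \<lambda>z\<in>X. w z i) i z) = w"
        by (auto simp: fun_eq_iff PiE_iff extensional_def)
    qed
    show "\<forall>v\<in>K \<rightarrow>\<^sub>E N. (\<lambda>i\<in>K. \<lambda>z\<in>X. (\<lambda>z\<in>X. \<lambda>i\<in>K. v i z) z i) = v"
    proof
      fix v assume v: "v \<in> K \<rightarrow>\<^sub>E N"
      then have "v i \<in> X \<rightarrow>\<^sub>E R" if "i \<in> K" for i
        using assms(2) that by blast
      with v show "(\<lambda>i\<in>K. \<lambda>z\<in>X. (\<lambda>z\<in>X. \<lambda>i\<in>K. v i z) z i) = v"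
        by (auto simp: fun_eq_iff PiE_iff extensional_def)
    qed
    show "(\<lambda>w. \<lambda>i\<in>K. \<lambda>z\<in>X. w z i) ` ?W \<subseteq> K \<rightarrow>\<^sub>E N"
      by auto
    show "(\<lambda>v. \<lambda>z\<in>X. \<lambda>i\<in>K. v i z) ` (K \<rightarrow>\<^sub>E N) \<subseteq> ?W"
    proof (rule image_subsetI)
      fix v assume v: "v \<in> K \<rightarrow>\<^sub>E N"
      then have v_R: "v i \<in> X \<rightarrow>\<^sub>E R" if "i \<in> K" for i
        using assms(2) that by blast
      then have "(\<lambda>z\<in>X. (\<lambda>z\<in>X. \<lambda>i\<in>K. v i z) z i) = v i" if "i \<in> K" for i
        using that by (auto simp: PiE_iff extensional_def fun_eq_iff)
      with v v_R show "(\<lambda>z\<in>X. \<lambda>i\<in>K. v i z) \<in> ?W"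
        by (auto simp: PiE_iff)
    qed
  qed
  then show ?thesis
    using assms(1) by (simp add: bij_betw_same_card card_PiE)
qed

lemma card_selecting_functions:
  fixes M :: nat
  assumes "finite X" "D \<subseteq> X" "x \<in> D" "0 < M"
  shows "card {f \<in> X \<rightarrow>\<^sub>E {..<M}. f x = 0 \<and> (\<forall>z\<in>D - {x}. f z \<noteq> 0)}
       = (M - 1) ^ (card D - 1) * M ^ (card X - card D)"
proof -
  define B where "B z = (if z = x then {0} else if z \<in> D then {..<M} - {0} else {..<M})" for z
  have "{f \<in> X \<rightarrow>\<^sub>E {..<M}. f x = 0 \<and> (\<forall>z\<in>D - {x}. f z \<noteq> 0)} = PiE X B"
    using assms(2-4) by (force simp: B_def PiE_iff extensional_def split: if_splits)
  moreover have "card (PiE X B) = card (B x) * (\<Prod>z\<in>D - {x}. card (B z)) * (\<Prod>z\<in>X - D. card (B z))"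
    using assms(1-3) finite_subset[OF assms(2,1)]
    by (simp add: card_PiE prod.subset_diff[OF assms(2,1)] prod.remove)
  moreover have "(\<Prod>z\<in>D - {x}. card (B z)) = (M - 1) ^ (card D - 1)"
    using assms(3,4) by (simp add: B_def card_Diff_singleton)
  moreover have "(\<Prod>z\<in>X - D. card (B z)) = (\<Prod>z\<in>X - D. M)"
    using assms(3) by (intro prod.cong) (auto simp: B_def)
  moreover have "card (X - D) = card X - card D"
    using assms(2) finite_subset[OF assms(2,1)] by (rule card_Diff_subset[rotated])
  ultimately show ?thesis
    by (simp add: B_def)
qed

definition selects :: "('a \<Rightarrow> nat \<Rightarrow> nat) \<Rightarrow> 'a \<Rightarrow> 'a set \<Rightarrow> nat \<Rightarrow> bool" where
  "selects w x D i \<longleftrightarrow> w x i = 0 \<and> (\<forall>z\<in>D - {x}. w z i \<noteq> 0)"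

lemma selects_cong:
  assumes "x \<in> D" "\<forall>z\<in>D. w z = w' z"
  shows "selects w x D i \<longleftrightarrow> selects w' x D i"
  using assms by (simp add: selects_def)

lemma depends_only_on_never_selected:
  assumes "x \<in> D"
  shows "depends_only_on X R D {w \<in> X \<rightarrow>\<^sub>E R. \<forall>i<k. \<not> selects w x D i}"
  unfolding depends_only_on_def
proof (intro ballI impI)
  fix w w' assume "w \<in> X \<rightarrow>\<^sub>E R" "w' \<in> X \<rightarrow>\<^sub>E R" "\<forall>z\<in>D. w z = w' z"
  moreover from this(3) have "selects w x D i \<longleftrightarrow> selects w' x D i" for i
    by (rule selects_cong[OF assms])
  ultimately show "w \<in> {w \<in> X \<rightarrow>\<^sub>E R. \<forall>i<k. \<not> selects w x D i}
      \<longleftrightarrow> w' \<in> {w \<in> X \<rightarrow>\<^sub>E R. \<forall>i<k. \<not> selects w x D i}"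
    by simp
qed

lemma card_never_selected:
  fixes M k :: nat
  assumes "finite X" "D \<subseteq> X" "x \<in> D" "0 < M"
  shows "real (card {w \<in> X \<rightarrow>\<^sub>E ({..<k} \<rightarrow>\<^sub>E {..<M}). \<forall>i<k. \<not> selects w x D i})
       = (1 - real (M - 1) ^ (card D - 1) / real M ^ card D) ^ k
         * real (card (X \<rightarrow>\<^sub>E ({..<k} \<rightarrow>\<^sub>E {..<M})))"
proof -
  define q where "q = real (M - 1) ^ (card D - 1) / real M ^ card D"
  define G where "G = {f \<in> X \<rightarrow>\<^sub>E {..<M}. f x = 0 \<and> (\<forall>z\<in>D - {x}. f z \<noteq> 0)}"
  define N where "N = (X \<rightarrow>\<^sub>E {..<M}) - G"
  have "x \<in> X"
    using assms(2,3) by blast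
  then have "{w \<in> X \<rightarrow>\<^sub>E ({..<k} \<rightarrow>\<^sub>E {..<M}). \<forall>i<k. \<not> selects w x D i}
      = {w \<in> X \<rightarrow>\<^sub>E ({..<k} \<rightarrow>\<^sub>E {..<M}). \<forall>i\<in>{..<k}. (\<lambda>z\<in>X. w z i) \<in> N}"
    using assms(2) by (auto simp: selects_def N_def G_def PiE_iff subset_iff)
  then have card_eq:
    "card {w \<in> X \<rightarrow>\<^sub>E ({..<k} \<rightarrow>\<^sub>E {..<M}). \<forall>i<k. \<not> selects w x D i} = card N ^ k"
    using card_PiE_transpose_Collect[of "{..<k}" N X "{..<M}"] by (simp add: N_def)
  have "real (card G) = real M ^ (card X - card D) * real (M - 1) ^ (card D - 1)"
    unfolding G_def card_selecting_functions[OF assms] by simp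
  also have "\<dots> = real M ^ card X * q"
    using card_mono[OF assms(1,2)] assms(4)
    by (simp add: q_def power_diff)
  finally have card_G: "real (card G) = real M ^ card X * q" .
  have "card N = M ^ card X - card G"
    using assms(1) by (simp add: N_def G_def card_Diff_subset card_PiE finite_PiE)
  moreover have "card G \<le> M ^ card X"
    using card_mono[of "X \<rightarrow>\<^sub>E {..<M}" G] assms(1) by (simp add: G_def card_PiE finite_PiE)
  ultimately have "real (card N) = real M ^ card X * (1 - q)"
    using card_G by (simp add: of_nat_diff algebra_simps)
  moreover have "card (X \<rightarrow>\<^sub>E ({..<k} \<rightarrow>\<^sub>E {..<M})) = (M ^ card X) ^ k"
    using assms(1) by (simp add: card_PiE power_mult[symmetric] mult.commute)
  ultimately show ?thesis
    unfolding card_eq q_def[symmetric] by (simp add: power_mult_distrib)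
qed

lemma exp_minus_one_le_one_minus_inverse_power:
  fixes M :: nat
  assumes "2 \<le> M"
  shows "exp (-1) \<le> (1 - 1 / real M) ^ (M - 1)"
proof -
  let ?b = "1 + 1 / real (M - 1)"
  have "?b ^ (M - 1) \<le> exp 1"
    using assms by (intro exp_ge_one_plus_x_over_n_power_n) auto
  then have "inverse (exp 1) \<le> inverse (?b ^ (M - 1))"
    by (rule le_imp_inverse_le) (intro zero_less_power add_pos_nonneg; simp)
  moreover have "1 - 1 / real M = inverse ?b"
    using assms by (simp add: of_nat_diff field_simps)
  ultimately show ?thesis
    by (simp add: exp_minus power_inverse)
qed

lemma selection_probability_ge:
  fixes M c :: nat
  assumes "2 \<le> M" "1 \<le> c" "c \<le> M"
  shows "1 / (3 * real M) \<le> real (M - 1) ^ (c - 1) / real M ^ c"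
proof -
  have "1 / 3 \<le> exp (-1 :: real)"
    using exp_le by (simp add: exp_minus field_simps)
  also have "\<dots> \<le> (1 - 1 / real M) ^ (M - 1)"
    using assms(1) by (rule exp_minus_one_le_one_minus_inverse_power)
  also have "\<dots> \<le> (1 - 1 / real M) ^ (c - 1)"
    using assms by (intro power_decreasing) auto
  also have "\<dots> = (real (M - 1) / real M) ^ (c - 1)"
    using assms(1) by (simp add: of_nat_diff field_simps)
  also have "\<dots> = real M * (real (M - 1) ^ (c - 1) / real M ^ c)"
  proof -
    have "real M ^ c = real M * real M ^ (c - 1)"
      using assms(2) by (metis Suc_diff_le diff_Suc_1 power_Suc)
    then show ?thesis
      using assms(1) by (simp add: power_divide)
  qed
  finally show ?thesis
    using assms(1) by (simp add: field_simps)
qed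

lemma never_selected_probability_le:
  fixes \<Delta> c k :: nat
  assumes "1 \<le> \<Delta>" "1 \<le> c" "c \<le> 2 * \<Delta>" "27 * real \<Delta> * ln (real \<Delta>) \<le> real k"
  shows "(1 - real (2 * \<Delta> - 1) ^ (c - 1) / real (2 * \<Delta>) ^ c) ^ k \<le> 1 / real \<Delta> ^ 4"
proof -
  define q where "q = real (2 * \<Delta> - 1) ^ (c - 1) / real (2 * \<Delta>) ^ c"
  have q_ge: "1 / (6 * real \<Delta>) \<le> q"
    using selection_probability_ge[of "2 * \<Delta>" c] assms(1-3) by (simp add: q_def)
  have "q \<le> 1"
  proof -
    have "real (2 * \<Delta> - 1) ^ (c - 1) \<le> real (2 * \<Delta>) ^ (c - 1)"
      by (intro power_mono) auto
    also have "\<dots> \<le> real (2 * \<Delta>) ^ c"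
      using assms(1) by (intro power_increasing) auto
    finally show ?thesis
      using assms(1) by (simp add: q_def)
  qed
  have ln_nonneg: "0 \<le> ln (real \<Delta>)"
    using assms(1) by simp
  have "(1 - q) ^ k \<le> exp (- q) ^ k"
    using \<open>q \<le> 1\<close> exp_ge_add_one_self[of "- q"] by (intro power_mono) auto
  also have "\<dots> = exp (- (q * real k))"
    by (simp add: exp_of_nat_mult[symmetric] mult.commute)
  also have "\<dots> \<le> exp (- (4 * ln (real \<Delta>)))"
  proof -
    have "1 / (6 * real \<Delta>) * (27 * real \<Delta> * ln (real \<Delta>)) \<le> q * real k"
      using q_ge assms(4) ln_nonneg order_trans[OF _ q_ge] by (intro mult_mono) auto
    then have "27 / 6 * ln (real \<Delta>) \<le> q * real k"
      using assms(1) by (simp add: field_simps)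
    then show ?thesis
      using ln_nonneg by simp
  qed
  also have "\<dots> = 1 / real \<Delta> ^ 4"
    using assms(1) exp_of_nat_mult[of 4 "ln (real \<Delta>)"] by (simp add: exp_minus divide_inverse)
  finally show ?thesis
    unfolding q_def .
qed

definition neighbours :: "'a set set \<Rightarrow> 'a \<Rightarrow> 'a set" where
  "neighbours E v = {u. {v, u} \<in> E}"

lemma finite_edges: "simple_graph V E \<Longrightarrow> finite E"
  unfolding simple_graph_def by (meson Pow_iff finite_Pow_iff finite_subset subsetI)

lemma degree_le_max_degree:
  assumes "simple_graph V E"
  shows "degree E v \<le> max_degree V E"
proof (cases "v \<in> V")
  case True
  then show ?thesis
    using assms by (simp add: max_degree_def simple_graph_def)
next
  case False
  then have "{e\<in>E. v \<in> e} = {}"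
    using assms by (auto simp: simple_graph_def)
  then show ?thesis
    by (simp only: degree_def card.empty zero_le)
qed

lemma card_neighbours_le_degree:
  assumes "finite E"
  shows "card (neighbours E v) \<le> degree E v"
proof -
  have "inj_on (\<lambda>u. {v, u}) (neighbours E v)"
    by (auto simp: inj_on_def doubleton_eq_iff)
  then have "card (neighbours E v) = card ((\<lambda>u. {v, u}) ` neighbours E v)"
    by (simp add: card_image)
  also have "\<dots> \<le> degree E v"
    unfolding degree_def using assms by (intro card_mono) (auto simp: neighbours_def)
  finally show ?thesis .
qed

lemma finite_neighbours: "simple_graph V E \<Longrightarrow> finite (neighbours E v)"
  unfolding simple_graph_def neighbours_def
  by (rule finite_subset[of _ V]) auto

definition inner_end :: "'a set \<Rightarrow> 'a set \<Rightarrow> 'a" where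
  "inner_end Y e = the_elem (e \<inter> Y)"

definition outer_end :: "'a set \<Rightarrow> 'a set \<Rightarrow> 'a" where
  "outer_end Y e = the_elem (e - Y)"

lemma cut_edge_ends:
  assumes "e \<in> cut_edges V E Y"
  shows "e = {inner_end Y e, outer_end Y e}" "inner_end Y e \<in> Y" "outer_end Y e \<in> V - Y"
    and "e \<in> E"
proof -
  obtain y x where yx: "y \<in> Y" "x \<in> V - Y" "e = {y, x}" "e \<in> E"
    using assms unfolding cut_edges_def by blast
  then have "e \<inter> Y = {y}" "e - Y = {x}"
    by auto
  then have "inner_end Y e = y" "outer_end Y e = x"
    unfolding inner_end_def outer_end_def by simp_all
  with yx show "e = {inner_end Y e, outer_end Y e}" "inner_end Y e \<in> Y"
    "outer_end Y e \<in> V - Y" "e \<in> E"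
    by auto
qed

definition outer_nbhd :: "'a set set \<Rightarrow> 'a set \<Rightarrow> 'a set \<Rightarrow> 'a set" where
  "outer_nbhd E Y e = {z. z \<notin> Y \<and> (\<exists>v\<in>e. {v, z} \<in> E)}"

lemma outer_end_in_outer_nbhd:
  assumes "e \<in> cut_edges V E Y"
  shows "outer_end Y e \<in> outer_nbhd E Y e"
proof -
  have "inner_end Y e \<in> e" "{inner_end Y e, outer_end Y e} \<in> E" "outer_end Y e \<notin> Y"
    using cut_edge_ends[OF assms] by (metis insertI1, simp_all)
  then show ?thesis
    unfolding outer_nbhd_def by blast
qed

lemma outer_nbhd_subset:
  assumes "simple_graph V E"
  shows "outer_nbhd E Y e \<subseteq> V - Y"
  using assms unfolding simple_graph_def outer_nbhd_def by auto

lemma card_outer_nbhd_le: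
  assumes "simple_graph V E" "e \<in> cut_edges V E Y"
  shows "card (outer_nbhd E Y e) \<le> 2 * max_degree V E"
proof -
  obtain y x where e: "e = {y, x}"
    using cut_edge_ends(1)[OF assms(2)] by blast
  have "outer_nbhd E Y e \<subseteq> neighbours E y \<union> neighbours E x"
    unfolding e outer_nbhd_def neighbours_def by auto
  then have "card (outer_nbhd E Y e) \<le> card (neighbours E y \<union> neighbours E x)"
    using finite_neighbours[OF assms(1)] by (intro card_mono) auto
  also have "\<dots> \<le> card (neighbours E y) + card (neighbours E x)"
    by (rule card_Un_le)
  also have "\<dots> \<le> degree E y + degree E x"
    using finite_edges[OF assms(1)] by (intro add_mono card_neighbours_le_degree)
  also have "\<dots> \<le> 2 * max_degree V E"
    using degree_le_max_degree[OF assms(1)] by (simp add: add_mono mult_2)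
  finally show ?thesis .
qed

lemma card_edges_at_neighbours_le:
  assumes "simple_graph V E"
  shows "card (\<Union>u\<in>neighbours E z. {f\<in>E. u \<in> f}) \<le> max_degree V E ^ 2"
proof -
  have "card (\<Union>u\<in>neighbours E z. {f\<in>E. u \<in> f}) \<le> (\<Sum>u\<in>neighbours E z. degree E u)"
    unfolding degree_def by (rule card_UN_le[OF finite_neighbours[OF assms]])
  also have "\<dots> \<le> (\<Sum>u\<in>neighbours E z. max_degree V E)"
    by (intro sum_mono degree_le_max_degree[OF assms])
  also have "\<dots> \<le> max_degree V E ^ 2"
    using card_neighbours_le_degree[OF finite_edges[OF assms], of z]
      degree_le_max_degree[OF assms, of z]
    by (simp add: power2_eq_square mult_right_mono)
  finally show ?thesis .
qed

lemma card_cut_edges_meeting_outer_nbhd_le: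
  assumes "simple_graph V E" "e \<in> cut_edges V E Y"
  shows "card {f \<in> cut_edges V E Y. outer_nbhd E Y f \<inter> outer_nbhd E Y e \<noteq> {}}
    \<le> 2 * max_degree V E ^ 3"
proof -
  let ?\<Delta> = "max_degree V E"
  define B where "B z = (\<Union>u\<in>neighbours E z. {f\<in>E. u \<in> f})" for z
  have finite_nbhd: "finite (outer_nbhd E Y e)"
    using finite_subset[OF outer_nbhd_subset[OF assms(1)]] assms(1)
    by (simp add: simple_graph_def)
  have finite_B: "finite (B z)" for z
    using finite_edges[OF assms(1)] unfolding B_def by (rule finite_subset[rotated]) auto
  have "{f \<in> cut_edges V E Y. outer_nbhd E Y f \<inter> outer_nbhd E Y e \<noteq> {}}
      \<subseteq> (\<Union>z\<in>outer_nbhd E Y e. B z)"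
  proof
    fix f assume "f \<in> {f \<in> cut_edges V E Y. outer_nbhd E Y f \<inter> outer_nbhd E Y e \<noteq> {}}"
    then obtain z v where "f \<in> E" "z \<in> outer_nbhd E Y e" "v \<in> f" "{v, z} \<in> E"
      using cut_edge_ends(4) unfolding outer_nbhd_def by blast
    moreover from this have "{z, v} \<in> E"
      by (simp add: insert_commute)
    ultimately show "f \<in> (\<Union>z\<in>outer_nbhd E Y e. B z)"
      unfolding B_def neighbours_def by blast
  qed
  then have "card {f \<in> cut_edges V E Y. outer_nbhd E Y f \<inter> outer_nbhd E Y e \<noteq> {}}
      \<le> card (\<Union>z\<in>outer_nbhd E Y e. B z)"
    using finite_nbhd finite_B by (intro card_mono) auto
  also have "\<dots> \<le> (\<Sum>z\<in>outer_nbhd E Y e. card (B z))"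
    by (rule card_UN_le[OF finite_nbhd])
  also have "\<dots> \<le> (\<Sum>z\<in>outer_nbhd E Y e. ?\<Delta> ^ 2)"
    unfolding B_def by (intro sum_mono card_edges_at_neighbours_le[OF assms(1)])
  also have "\<dots> \<le> 2 * ?\<Delta> * ?\<Delta> ^ 2"
    using card_outer_nbhd_le[OF assms] by (simp add: mult_right_mono)
  finally show ?thesis
    by (simp add: power2_eq_square power3_eq_cube mult.assoc)
qed

lemma triangle_edge:
  assumes "triangle E a b c" "u \<in> {a, b, c}" "v \<in> {a, b, c}" "u \<noteq> v"
  shows "{u, v} \<in> E"
  using assms unfolding triangle_def by (auto simp: insert_commute)

lemma good_set_if_selected:
  assumes "independent_set V E Y" "F \<subseteq> cut_edges V E Y"
    and selected: "\<And>e. e \<in> F \<Longrightarrow> selects w (outer_end Y e) (outer_nbhd E Y e) i"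
  shows "good_set E F"
  unfolding good_set_def
proof (intro conjI ballI impI)
  show "F \<subseteq> E"
    using assms(2) cut_edge_ends(4) by blast
  fix e f assume e: "e \<in> F" and f: "f \<in> F" and "e \<noteq> f"
  define y x y' x' where end_defs: "y = inner_end Y e" "x = outer_end Y e"
    "y' = inner_end Y f" "x' = outer_end Y f"
  have ends: "e = {y, x}" "f = {y', x'}" "y \<in> Y" "y' \<in> Y" "x \<notin> Y" "x' \<notin> Y"
    using cut_edge_ends[of _ V E Y] e f assms(2) unfolding end_defs by blast+
  have "{y, y'} \<notin> E"
    using assms(1) ends(3,4) unfolding independent_set_def by blast
  have "w x i = 0" "w x' i = 0"
    using selected[OF e] selected[OF f] unfolding selects_def end_defs by simp_all
  then have x'_far: "x' \<notin> outer_nbhd E Y e" and x_far: "x \<notin> outer_nbhd E Y f" if "x \<noteq> x'"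
    using selected[OF e] selected[OF f] that unfolding selects_def end_defs[symmetric]
    by (metis DiffI singletonD)+
  show "\<not> ((e \<inter> f = {} \<and> (\<exists>u\<in>e. \<exists>v\<in>f. {u, v} \<in> E)) \<or>
           (\<exists>a b c. triangle E a b c \<and> e \<subseteq> {a, b, c} \<and> f \<subseteq> {a, b, c}))"
  proof (cases "x = x'")
    case True
    then have "y \<noteq> y'"
      using \<open>e \<noteq> f\<close> ends(1,2) by blast
    then have "\<not> (triangle E a b c \<and> e \<subseteq> {a, b, c} \<and> f \<subseteq> {a, b, c})" for a b c
      using triangle_edge[of E a b c y y'] \<open>{y, y'} \<notin> E\<close> ends(1,2) by auto
    moreover have "x \<in> e \<inter> f"
      using True ends(1,2) by simp
    ultimately show ?thesis
      by blast
  next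
    case False
    have "{x, x'} \<notin> E" "{y, x'} \<notin> E" "{y', x} \<notin> E"
      using x'_far[OF False] x_far[OF False] ends unfolding outer_nbhd_def by auto
    then have "\<forall>u\<in>e. \<forall>v\<in>f. {u, v} \<notin> E"
      using \<open>{y, y'} \<notin> E\<close> ends(1,2) by (auto simp: insert_commute)
    moreover have "\<not> (triangle E a b c \<and> e \<subseteq> {a, b, c} \<and> f \<subseteq> {a, b, c})" for a b c
      using triangle_edge[of E a b c x x'] False \<open>{x, x'} \<notin> E\<close> ends(1,2) by auto
    ultimately show ?thesis
      by blast
  qed
qed

lemma card_never_selected_cut_edge_le:
  assumes "simple_graph V E" "e \<in> cut_edges V E Y" "max_degree V E = \<Delta>" "1 \<le> \<Delta>"
    and "27 * real \<Delta> * ln (real \<Delta>) \<le> real k"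
  shows "real (card {w \<in> (V - Y) \<rightarrow>\<^sub>E ({..<k} \<rightarrow>\<^sub>E {..<2 * \<Delta>}).
            \<forall>i<k. \<not> selects w (outer_end Y e) (outer_nbhd E Y e) i})
    \<le> 1 / real \<Delta> ^ 4 * real (card ((V - Y) \<rightarrow>\<^sub>E ({..<k} \<rightarrow>\<^sub>E {..<2 * \<Delta>})))"
proof -
  let ?D = "outer_nbhd E Y e"
  have "finite (V - Y)"
    using assms(1) by (simp add: simple_graph_def)
  moreover have "finite ?D"
    using finite_subset[OF outer_nbhd_subset[OF assms(1)] calculation] .
  then have "1 \<le> card ?D"
    using outer_end_in_outer_nbhd[OF assms(2)] by (auto simp: Suc_le_eq card_gt_0_iff)
  moreover have "card ?D \<le> 2 * \<Delta>"
    using card_outer_nbhd_le[OF assms(1,2)] assms(3) by simp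
  ultimately have bound: "(1 - real (2 * \<Delta> - 1) ^ (card ?D - 1) / real (2 * \<Delta>) ^ card ?D) ^ k
      \<le> 1 / real \<Delta> ^ 4"
    by (intro never_selected_probability_le assms(4,5))
  have "real (card {w \<in> (V - Y) \<rightarrow>\<^sub>E ({..<k} \<rightarrow>\<^sub>E {..<2 * \<Delta>}).
            \<forall>i<k. \<not> selects w (outer_end Y e) ?D i})
    = (1 - real (2 * \<Delta> - 1) ^ (card ?D - 1) / real (2 * \<Delta>) ^ card ?D) ^ k
      * real (card ((V - Y) \<rightarrow>\<^sub>E ({..<k} \<rightarrow>\<^sub>E {..<2 * \<Delta>})))"
    using assms(4) \<open>finite (V - Y)\<close> outer_nbhd_subset[OF assms(1)] outer_end_in_outer_nbhd[OF assms(2)]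
    by (intro card_never_selected) auto
  with mult_right_mono[OF bound] show ?thesis
    by simp
qed

lemma exists_colouring_selecting_cut_edges:
  assumes "simple_graph V E" "max_degree V E = \<Delta>" "8 \<le> \<Delta>"
    and "27 * real \<Delta> * ln (real \<Delta>) \<le> real k"
  shows "\<exists>w. \<forall>e\<in>cut_edges V E Y. \<exists>i<k. selects w (outer_end Y e) (outer_nbhd E Y e) i"
proof -
  let ?R = "{..<k} \<rightarrow>\<^sub>E {..<2 * \<Delta>}"
  define A where
    "A e = {w \<in> (V - Y) \<rightarrow>\<^sub>E ?R. \<forall>i<k. \<not> selects w (outer_end Y e) (outer_nbhd E Y e) i}" for e
  interpret counting_local_lemma "V - Y" ?R "cut_edges V E Y" A "outer_nbhd E Y"
    "1 / real \<Delta> ^ 4" "2 * \<Delta> ^ 3"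
  proof
    show "finite (V - Y)"
      using assms(1) by (simp add: simple_graph_def)
    show "finite (cut_edges V E Y)"
      using finite_edges[OF assms(1)] by (rule finite_subset[rotated]) (auto simp: cut_edges_def)
    show "finite ?R" "?R \<noteq> {}"
      using assms(3) by (auto simp: finite_PiE PiE_eq_empty_iff lessThan_empty_iff)
    show "A e \<subseteq> (V - Y) \<rightarrow>\<^sub>E ?R" "outer_nbhd E Y e \<subseteq> V - Y" for e
      using outer_nbhd_subset[OF assms(1)] by (auto simp: A_def)
    show "depends_only_on (V - Y) ?R (outer_nbhd E Y e) (A e)" if "e \<in> cut_edges V E Y" for e
      unfolding A_def by (rule depends_only_on_never_selected[OF outer_end_in_outer_nbhd[OF that]])
    show "real (card (A e)) \<le> 1 / real \<Delta> ^ 4 * real (card ((V - Y) \<rightarrow>\<^sub>E ?R))"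
      if "e \<in> cut_edges V E Y" for e
      unfolding A_def using card_never_selected_cut_edge_le[OF assms(1) that assms(2) _ assms(4)] assms(3)
      by simp
    show "card {f \<in> cut_edges V E Y. outer_nbhd E Y f \<inter> outer_nbhd E Y e \<noteq> {}} \<le> 2 * \<Delta> ^ 3"
      if "e \<in> cut_edges V E Y" for e
      using card_cut_edges_meeting_outer_nbhd_le[OF assms(1) that] assms(2) by simp
    show "0 \<le> 1 / real \<Delta> ^ 4" "1 \<le> 2 * \<Delta> ^ 3"
      using assms(3) by auto
    have "real \<Delta> ^ 4 = real \<Delta> ^ 3 * real \<Delta>"
      by (simp add: power_Suc2[symmetric])
    then have "4 * (1 / real \<Delta> ^ 4) * real (2 * \<Delta> ^ 3) = 8 / real \<Delta>"
      using assms(3) by simp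
    then show "4 * (1 / real \<Delta> ^ 4) * real (2 * \<Delta> ^ 3) \<le> 1"
      using assms(3) by simp
  qed
  obtain w where "\<forall>e\<in>cut_edges V E Y. w \<notin> A e" "w \<in> (V - Y) \<rightarrow>\<^sub>E ?R"
    using exists_avoiding_all by blast
  then show ?thesis
    unfolding A_def by blast
qed

lemma exists_partition_by_witness:
  assumes "\<forall>x\<in>I. \<exists>i<k. Q x i"
  shows "\<exists>P. (\<Union>i<k. P i) = I \<and> (\<forall>i<k. \<forall>j<k. i \<noteq> j \<longrightarrow> P i \<inter> P j = {})
    \<and> (\<forall>i<k. \<forall>x\<in>P i. Q x i)"
proof -
  obtain c where c: "\<forall>x\<in>I. c x < k \<and> Q x (c x)"
    using bchoice[OF assms] by blast
  define P where "P i = {x\<in>I. c x = i}" for i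
  have "(\<Union>i<k. P i) = I"
    using c by (auto simp: P_def)
  moreover have "\<forall>i<k. \<forall>j<k. i \<noteq> j \<longrightarrow> P i \<inter> P j = {}"
    by (auto simp: P_def)
  moreover have "\<forall>i<k. \<forall>x\<in>P i. Q x i"
    using c by (auto simp: P_def)
  ultimately show ?thesis
    by blast
qed

theorem theorem3p2:
  fixes V :: "'a set" and E :: "'a set set" and Y :: "'a set" and \<Delta> :: nat
  assumes "\<Delta> \<ge> 41"
    and "simple_graph V E"
    and "V \<noteq> {}"
    and "max_degree V E = \<Delta>"
    and "independent_set V E Y"
  shows "\<exists>P :: nat \<Rightarrow> 'a set set.
           (\<Union>i<nat \<lceil>27 * real \<Delta> * ln (real \<Delta>)\<rceil>. P i) = cut_edges V E Y \<and>
           (\<forall>i<nat \<lceil>27 * real \<Delta> * ln (real \<Delta>)\<rceil>. \<forall>j<nat \<lceil>27 * real \<Delta> * ln (real \<Delta>)\<rceil>.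
               i \<noteq> j \<longrightarrow> P i \<inter> P j = {}) \<and>
           (\<forall>i<nat \<lceil>27 * real \<Delta> * ln (real \<Delta>)\<rceil>. good_set E (P i))"
proof -
  define k where "k = nat \<lceil>27 * real \<Delta> * ln (real \<Delta>)\<rceil>"
  have "8 \<le> \<Delta>"
    using assms(1) by simp
  moreover have "27 * real \<Delta> * ln (real \<Delta>) \<le> real k"
    unfolding k_def by linarith
  ultimately have "\<exists>w. \<forall>e\<in>cut_edges V E Y. \<exists>i<k. selects w (outer_end Y e) (outer_nbhd E Y e) i"
    by (rule exists_colouring_selecting_cut_edges[OF assms(2,4)])
  then obtain w where "\<forall>e\<in>cut_edges V E Y. \<exists>i<k. selects w (outer_end Y e) (outer_nbhd E Y e) i"
    by blast
  then obtain P where partition: "(\<Union>i<k. P i) = cut_edges V E Y"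
      "\<forall>i<k. \<forall>j<k. i \<noteq> j \<longrightarrow> P i \<inter> P j = {}"
    and selected: "\<forall>i<k. \<forall>e\<in>P i. selects w (outer_end Y e) (outer_nbhd E Y e) i"
    using exists_partition_by_witness[of "cut_edges V E Y" k
      "\<lambda>e i. selects w (outer_end Y e) (outer_nbhd E Y e) i"] by auto
  have "good_set E (P i)" if "i < k" for i
  proof (rule good_set_if_selected[OF assms(5)])
    show "P i \<subseteq> cut_edges V E Y"
      using partition(1) that by blast
    show "selects w (outer_end Y e) (outer_nbhd E Y e) i" if "e \<in> P i" for e
      using selected \<open>i < k\<close> that by blast
  qed
  with partition show ?thesis
    unfolding k_def[symmetric] by blast
qed

end
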